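(* Let $\mathfrak{u}=(U_i,u_i,u^i)_{i\in\mathbb Z}$ be a representation of $\mathcal Z$ and $\mathfrak{u}^\vee$ its dual. Then $\mathfrak{u}$ is pure (resp. nontrivial, resp. a special chain) if and only if $\mathfrak{u}^\vee$ is pure (resp. nontrivial, resp. a special chain). Moreover, $\mathfrak{u}$ is a linked chain if and only if $\mathfrak{u}^\vee$ is a colinked chain. Finally, for a subset $H\subseteq\mathbb Z$, $\mathfrak{u}$ has support $H$ if and only if $\mathfrak{u}^\vee$ has cosupport $H$.
   Context: Let $k$ be a field. $\mathcal Z$ is the quiver with vertex set $\mathbb Z$ and, for each $i\in\mathbb Z$, arrows $\alpha^i\colon i\to i+1$ and $\alpha_i\colon i+1\to i$. A representation $\mathfrak{u}=(U_i,u_i,u^i)_{i\in\mathbb Z}$ consists of finite-dimensional $k$-vector spaces $U_i$ and linear maps $u^i\colon U_i\to U_{i+1}$, $u_i\colon U_{i+1}\to U_i$. Its dual is $\mathfrak{u}^\vee=(U_i^\vee,(u^i)^\vee,(u_i)^\vee)_{i\in\mathbb Z}$, i.e. the map associated to $\alpha_i$ is $(u^i)^\vee$ and to $\alpha^i$ is $(u_i)^\vee$. Compositions: $u^i_i=\mathrm{Id}$, $u^i_j=u^{j-1}\circ\cdots\circ u^i$ for $j>i$, $u^i_j=u_j\circ\cdots\circ u_{i-1}$ for $j<i$. The representation is pure if all $U_i$ have the same dimension, nontrivial if $U_i\neq0$ for all $i$. A special chain: $u_i\circ u^i=0$ and $u^i\circ u_i=0$ for all $i$. A linked chain: special chain with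 $\ker(u_{i-1})\cap\ker(u^i)=0$ for all $i$. A colinked chain: special chain with $\mathrm{Im}(u_i)+\mathrm{Im}(u^{i-1})=U_i$ for all $i$. $H\subseteq\mathbb Z$ is a support if for each $i\in\mathbb Z$ there is $j\in H$ with $u^j_i$ surjective, and a cosupport if for each $i$ there is $j\in H$ with $u^i_j$ injective. *)

theory Defs
  imports Main HOL.Vector_Spaces "HOL-Library.Function_Algebras"
begin

text \<open>A representation of the quiver Z over a field 'a is modelled by a
scalar multiplication scale on an ambient abelian group 'v (making it a
vector space), a family U of finite-dimensional subspaces U i (i in Z), and
maps up i : U i \<rightarrow> U (i+1) (arrow alpha^i) and dn i : U (i+1) \<rightarrow> U i
(arrow alpha_i), linear on the relevant subspaces.  Only the values of the
maps on the subspaces matter.\<close>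

definition lin_on ::
  "('a \<Rightarrow> 'v \<Rightarrow> 'v) \<Rightarrow> ('a \<Rightarrow> 'w \<Rightarrow> 'w) \<Rightarrow> 'v set \<Rightarrow> 'w set \<Rightarrow> ('v::ab_group_add \<Rightarrow> 'w::ab_group_add) \<Rightarrow> bool"
  where "lin_on s1 s2 A B f \<longleftrightarrow>
     (\<forall>x\<in>A. f x \<in> B) \<and> (\<forall>x\<in>A. \<forall>y\<in>A. f (x + y) = f x + f y) \<and>
     (\<forall>c. \<forall>x\<in>A. f (s1 c x) = s2 c (f x))"

definition fin_dim_subspace :: "('a::field \<Rightarrow> 'v::ab_group_add \<Rightarrow> 'v) \<Rightarrow> 'v set \<Rightarrow> bool"
  where "fin_dim_subspace s A \<longleftrightarrow>
     module.subspace s A \<and> (\<exists>B. finite B \<and> B \<subseteq> A \<and> module.span s B = A)"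

definition is_rep ::
  "('a::field \<Rightarrow> 'v::ab_group_add \<Rightarrow> 'v) \<Rightarrow> (int \<Rightarrow> 'v set) \<Rightarrow> (int \<Rightarrow> 'v \<Rightarrow> 'v) \<Rightarrow> (int \<Rightarrow> 'v \<Rightarrow> 'v) \<Rightarrow> bool"
  where "is_rep s U up dn \<longleftrightarrow> vector_space s \<and>
     (\<forall>i. fin_dim_subspace s (U i) \<and> lin_on s s (U i) (U (i+1)) (up i)
          \<and> lin_on s s (U (i+1)) (U i) (dn i))"

definition dual_scale :: "'a::field \<Rightarrow> ('v \<Rightarrow> 'a) \<Rightarrow> ('v \<Rightarrow> 'a)"
  where "dual_scale c \<phi> = (\<lambda>x. c * \<phi> x)"

definition dual_space :: "('a::field \<Rightarrow> 'v::ab_group_add \<Rightarrow> 'v) \<Rightarrow> 'v set \<Rightarrow> ('v \<Rightarrow> 'a) set"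
  where "dual_space s A = {\<phi>. lin_on s (*) A UNIV \<phi> \<and> (\<forall>x. x \<notin> A \<longrightarrow> \<phi> x = 0)}"

definition dual_map :: "'v set \<Rightarrow> ('v \<Rightarrow> 'v) \<Rightarrow> ('v \<Rightarrow> 'a::zero) \<Rightarrow> ('v \<Rightarrow> 'a)"
  where "dual_map A f \<phi> = (\<lambda>x. if x \<in> A then \<phi> (f x) else 0)"

text \<open>The dual representation: spaces U_i^dual; the map for alpha^i is
(u_i)^dual : U_i^dual \<rightarrow> U_{i+1}^dual and the map for alpha_i is
(u^i)^dual : U_{i+1}^dual \<rightarrow> U_i^dual.\<close>

definition dual_U :: "('a::field \<Rightarrow> 'v::ab_group_add \<Rightarrow> 'v) \<Rightarrow> (int \<Rightarrow> 'v set) \<Rightarrow> int \<Rightarrow> ('v \<Rightarrow> 'a) set"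
  where "dual_U s U i = dual_space s (U i)"

definition dual_up :: "(int \<Rightarrow> 'v set) \<Rightarrow> (int \<Rightarrow> 'v \<Rightarrow> 'v) \<Rightarrow> int \<Rightarrow> ('v \<Rightarrow> 'a::zero) \<Rightarrow> ('v \<Rightarrow> 'a)"
  where "dual_up U dn i = dual_map (U (i+1)) (dn i)"

definition dual_dn :: "(int \<Rightarrow> 'v set) \<Rightarrow> (int \<Rightarrow> 'v \<Rightarrow> 'v) \<Rightarrow> int \<Rightarrow> ('v \<Rightarrow> 'a::zero) \<Rightarrow> ('v \<Rightarrow> 'a)"
  where "dual_dn U up i = dual_map (U i) (up i)"

fun upcomp :: "(int \<Rightarrow> 'w \<Rightarrow> 'w) \<Rightarrow> int \<Rightarrow> nat \<Rightarrow> 'w \<Rightarrow> 'w" where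
  "upcomp up i 0 = id"
| "upcomp up i (Suc n) = up (i + int n) \<circ> upcomp up i n"

fun dncomp :: "(int \<Rightarrow> 'w \<Rightarrow> 'w) \<Rightarrow> int \<Rightarrow> nat \<Rightarrow> 'w \<Rightarrow> 'w" where
  "dncomp dn i 0 = id"
| "dncomp dn i (Suc n) = dn (i - int n - 1) \<circ> dncomp dn i n"

definition comp_map :: "(int \<Rightarrow> 'w \<Rightarrow> 'w) \<Rightarrow> (int \<Rightarrow> 'w \<Rightarrow> 'w) \<Rightarrow> int \<Rightarrow> int \<Rightarrow> 'w \<Rightarrow> 'w"
  where "comp_map up dn i j = (if i \<le> j then upcomp up i (nat (j - i)) else dncomp dn i (nat (i - j)))"

definition pure :: "('a::field \<Rightarrow> 'w::ab_group_add \<Rightarrow> 'w) \<Rightarrow> (int \<Rightarrow> 'w set) \<Rightarrow> bool"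
  where "pure s U \<longleftrightarrow> (\<forall>i j. vector_space.dim s (U i) = vector_space.dim s (U j))"

definition nontrivial :: "(int \<Rightarrow> 'w::zero set) \<Rightarrow> bool"
  where "nontrivial U \<longleftrightarrow> (\<forall>i. U i \<noteq> {0})"

definition special_chain :: "(int \<Rightarrow> 'w::zero set) \<Rightarrow> (int \<Rightarrow> 'w \<Rightarrow> 'w) \<Rightarrow> (int \<Rightarrow> 'w \<Rightarrow> 'w) \<Rightarrow> bool"
  where "special_chain U up dn \<longleftrightarrow>
    (\<forall>i. (\<forall>x\<in>U i. dn i (up i x) = 0) \<and> (\<forall>x\<in>U (i+1). up i (dn i x) = 0))"

definition linked_chain :: "(int \<Rightarrow> 'w::zero set) \<Rightarrow> (int \<Rightarrow> 'w \<Rightarrow> 'w) \<Rightarrow> (int \<Rightarrow> 'w \<Rightarrow> 'w) \<Rightarrow> bool"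
  where "linked_chain U up dn \<longleftrightarrow> special_chain U up dn \<and>
    (\<forall>i. {x \<in> U i. dn (i - 1) x = 0 \<and> up i x = 0} = {0})"

definition colinked_chain :: "(int \<Rightarrow> 'w::ab_group_add set) \<Rightarrow> (int \<Rightarrow> 'w \<Rightarrow> 'w) \<Rightarrow> (int \<Rightarrow> 'w \<Rightarrow> 'w) \<Rightarrow> bool"
  where "colinked_chain U up dn \<longleftrightarrow> special_chain U up dn \<and>
    (\<forall>i. {a + b | a b. a \<in> dn i ` U (i+1) \<and> b \<in> up (i - 1) ` U (i - 1)} = U i)"

definition is_support :: "(int \<Rightarrow> 'w set) \<Rightarrow> (int \<Rightarrow> 'w \<Rightarrow> 'w) \<Rightarrow> (int \<Rightarrow> 'w \<Rightarrow> 'w) \<Rightarrow> int set \<Rightarrow> bool"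
  where "is_support U up dn H \<longleftrightarrow> (\<forall>i. \<exists>j\<in>H. comp_map up dn j i ` U j = U i)"

definition is_cosupport :: "(int \<Rightarrow> 'w set) \<Rightarrow> (int \<Rightarrow> 'w \<Rightarrow> 'w) \<Rightarrow> (int \<Rightarrow> 'w \<Rightarrow> 'w) \<Rightarrow> int set \<Rightarrow> bool"
  where "is_cosupport U up dn H \<longleftrightarrow> (\<forall>i. \<exists>j\<in>H. inj_on (comp_map up dn i j) (U i))"

end

theory Submission
  imports Defs
begin

text \<open>
  Everything reduces to duality for a single subspace \<open>A\<close>: a functional on a subspace of \<open>A\<close>
  extends to \<open>A\<close>, functionals separate points from subspaces, and the coordinate functionals of
  a finite basis of \<open>A\<close> form a basis of \<open>A\<^sup>\<or>\<close> (only this dimension count needs finite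
  dimension). Consequently a functional vanishing on \<open>ker f\<close> factors through \<open>f\<close>, and
  \<open>f\<close> is onto iff \<open>f\<^sup>\<or>\<close> is injective; \<open>g \<circ> f = 0\<close> iff \<open>f\<^sup>\<or> \<circ> g\<^sup>\<or> = 0\<close>; and
  \<open>ker f\<^sub>1 \<inter> ker f\<^sub>2 = 0\<close> iff \<open>im f\<^sub>1\<^sup>\<or> + im f\<^sub>2\<^sup>\<or> = A\<^sup>\<or>\<close>.
  Applied to the maps \<open>u\<^sup>i\<close>, \<open>u\<^sub>i\<close> and to the composites \<open>u\<^sup>i\<^sub>j\<close>, whose duals are the
  composites of the dual maps taken in the opposite direction, these give the five equivalences.
\<close>

lemma sum_apply: "sum f A x = (\<Sum>a\<in>A. f a x)"
  by (induction A rule: infinite_finite_induct) auto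

lemma lin_on_zero: "lin_on s1 s2 A B f \<Longrightarrow> 0 \<in> A \<Longrightarrow> f 0 = 0"
  unfolding lin_on_def by (metis add.right_neutral add_left_cancel)

lemma lin_on_diff:
  "lin_on s1 s2 A B f \<Longrightarrow> x \<in> A \<Longrightarrow> y \<in> A \<Longrightarrow> x - y \<in> A \<Longrightarrow> f (x - y) = f x - f y"
  unfolding lin_on_def by (metis eq_diff_eq)

lemma lin_on_comp: "lin_on s1 s2 A B f \<Longrightarrow> lin_on s2 s3 B C g \<Longrightarrow> lin_on s1 s3 A C (g \<circ> f)"
  unfolding lin_on_def by auto

lemma lin_on_subset: "lin_on s1 s2 A B f \<Longrightarrow> A' \<subseteq> A \<Longrightarrow> lin_on s1 s2 A' B f"
  unfolding lin_on_def by blast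

lemma vector_space_field_mult: "vector_space ((*) :: 'a::field \<Rightarrow> 'a \<Rightarrow> 'a)"
  by unfold_locales (auto simp: algebra_simps)

interpretation dual: vector_space "dual_scale :: 'a::field \<Rightarrow> ('v \<Rightarrow> 'a) \<Rightarrow> ('v \<Rightarrow> 'a)"
  by unfold_locales (auto simp: dual_scale_def fun_eq_iff algebra_simps)

lemma subspace_dual_space: "dual.subspace (dual_space s A)"
  by (auto simp: dual.subspace_def dual_space_def lin_on_def dual_scale_def algebra_simps)

lemma dual_space_apply_zero: "\<phi> \<in> dual_space s A \<Longrightarrow> \<phi> 0 = 0"
  unfolding dual_space_def by (cases "0 \<in> A") (auto dest: lin_on_zero)

lemma independent_dual_basis:
  assumes "\<And>b v. v \<in> BA \<Longrightarrow> e b v = (if v = b then (1 :: 'a::field) else 0)"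
  shows "dual.independent (e ` BA)"
  unfolding dual.independent_explicit_module
proof (intro allI impI)
  fix t u \<phi> assume t: "finite t" "t \<subseteq> e ` BA" "(\<Sum>\<chi>\<in>t. dual_scale (u \<chi>) \<chi>) = 0" "\<phi> \<in> t"
  obtain b where b: "b \<in> BA" "\<phi> = e b" using t by blast
  have eval_b: "\<chi> b = (if \<chi> = \<phi> then 1 else 0)" if \<chi>: "\<chi> \<in> t" for \<chi>
  proof -
    obtain b' where b': "b' \<in> BA" "\<chi> = e b'" using \<chi> t(2) by blast
    have "e b b = 1" "b' \<noteq> b \<Longrightarrow> e b' b = 0"
      using assms[OF b(1)] by simp_all
    then show ?thesis
      using b b' by (cases "b' = b") auto
  qed
  have "(\<Sum>\<chi>\<in>t. dual_scale (u \<chi>) \<chi>) b = (\<Sum>\<chi>\<in>t. u \<chi> * \<chi> b)"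
    by (simp add: sum_apply dual_scale_def)
  also have "\<dots> = (\<Sum>\<chi>\<in>t. if \<chi> = \<phi> then u \<chi> else 0)"
    by (intro sum.cong) (simp_all add: eval_b)
  also have "\<dots> = u \<phi>"
    using t(1,4) by simp
  finally show "u \<phi> = 0" using t(3) by simp
qed

lemma upcomp_Suc_right: "upcomp up i (Suc n) = upcomp up (i + 1) n \<circ> up i"
  by (induction n) (simp_all add: fun_eq_iff add_ac)

lemma dncomp_Suc_right: "dncomp dn (i + 1) (Suc n) = dncomp dn i n \<circ> dn i"
  by (induction n) (simp_all add: fun_eq_iff add_ac)

lemma lin_on_upcomp:
  assumes "\<And>i. lin_on s s (U i) (U (i + 1)) (up i)"
  shows "lin_on s s (U i) (U (i + int n)) (upcomp up i n)"
proof (induction n)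
  case 0
  show ?case by (simp add: lin_on_def)
next
  case (Suc n)
  have "lin_on s s (U i) (U (i + int n + 1)) (up (i + int n) \<circ> upcomp up i n)"
    by (rule lin_on_comp[OF Suc assms])
  moreover have "i + int (Suc n) = i + int n + 1" by simp
  ultimately show ?case by (simp only: upcomp.simps)
qed

lemma lin_on_dncomp:
  assumes "\<And>i. lin_on s s (U (i + 1)) (U i) (dn i)"
  shows "lin_on s s (U i) (U (i - int n)) (dncomp dn i n)"
proof (induction n)
  case 0
  show ?case by (simp add: lin_on_def)
next
  case (Suc n)
  have "lin_on s s (U (i - int n - 1 + 1)) (U (i - int n - 1)) (dn (i - int n - 1))"
    by (rule assms)
  then have "lin_on s s (U i) (U (i - int n - 1)) (dn (i - int n - 1) \<circ> dncomp dn i n)"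
    using lin_on_comp[OF Suc] by simp
  moreover have "i - int (Suc n) = i - int n - 1" by simp
  ultimately show ?case by (simp only: dncomp.simps)
qed

lemma lin_on_comp_map:
  assumes "\<And>i. lin_on s s (U i) (U (i + 1)) (up i)" "\<And>i. lin_on s s (U (i + 1)) (U i) (dn i)"
  shows "lin_on s s (U i) (U j) (comp_map up dn i j)"
  using lin_on_upcomp[where U = U and up = up, OF assms(1), of i "nat (j - i)"]
    lin_on_dncomp[where U = U and dn = dn, OF assms(2), of i "nat (i - j)"]
  by (cases "i \<le> j") (simp_all add: comp_map_def)

lemma dual_map_dual_map:
  "(\<And>x. x \<in> A \<Longrightarrow> f x \<in> B) \<Longrightarrow> dual_map A f (dual_map B g \<phi>) = dual_map A (g \<circ> f) \<phi>"
  by (auto simp: dual_map_def fun_eq_iff)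

lemma upcomp_dual_up:
  assumes "\<And>i x. x \<in> U (i + 1) \<Longrightarrow> dn i x \<in> U i" "\<forall>x. x \<notin> U i \<longrightarrow> \<phi> x = 0"
  shows "upcomp (dual_up U dn) i n \<phi> = dual_map (U (i + int n)) (dncomp dn (i + int n) n) \<phi>"
proof (induction n)
  case 0
  show ?case using assms(2) by (auto simp: dual_map_def)
next
  case (Suc n)
  have "upcomp (dual_up U dn) i (Suc n) \<phi>
      = dual_map (U (i + int n + 1)) (dn (i + int n)) (dual_map (U (i + int n)) (dncomp dn (i + int n) n) \<phi>)"
    by (simp only: upcomp.simps comp_apply Suc.IH dual_up_def)
  also have "\<dots> = dual_map (U (i + int n + 1)) (dncomp dn (i + int n) n \<circ> dn (i + int n)) \<phi>"
    by (rule dual_map_dual_map[OF assms(1)])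
  also have "\<dots> = dual_map (U (i + int n + 1)) (dncomp dn (i + int n + 1) (Suc n)) \<phi>"
    by (simp only: dncomp_Suc_right)
  also have "i + int n + 1 = i + int (Suc n)" by simp
  finally show ?case .
qed

lemma dncomp_dual_dn:
  assumes "\<And>i x. x \<in> U i \<Longrightarrow> up i x \<in> U (i + 1)" "\<forall>x. x \<notin> U i \<longrightarrow> \<phi> x = 0"
  shows "dncomp (dual_dn U up) i n \<phi> = dual_map (U (i - int n)) (upcomp up (i - int n) n) \<phi>"
proof (induction n)
  case 0
  show ?case using assms(2) by (auto simp: dual_map_def)
next
  case (Suc n)
  have k: "i - int n - 1 + 1 = i - int n" by simp
  have "dncomp (dual_dn U up) i (Suc n) \<phi>
      = dual_map (U (i - int n - 1)) (up (i - int n - 1)) (dual_map (U (i - int n)) (upcomp up (i - int n) n) \<phi>)"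
    by (simp only: dncomp.simps comp_apply Suc.IH dual_dn_def)
  also have "\<dots> = dual_map (U (i - int n - 1)) (upcomp up (i - int n) n \<circ> up (i - int n - 1)) \<phi>"
    by (rule dual_map_dual_map) (metis assms(1) k)
  also have "\<dots> = dual_map (U (i - int n - 1)) (upcomp up (i - int n - 1) (Suc n)) \<phi>"
    by (simp only: upcomp_Suc_right k)
  also have "i - int n - 1 = i - int (Suc n)" by simp
  finally show ?case .
qed

lemma comp_map_dual_eq_dual_map:
  assumes "\<And>i x. x \<in> U i \<Longrightarrow> up i x \<in> U (i + 1)" "\<And>i x. x \<in> U (i + 1) \<Longrightarrow> dn i x \<in> U i"
    and "\<forall>x. x \<notin> U i \<longrightarrow> \<phi> x = 0"
  shows "comp_map (dual_up U dn) (dual_dn U up) i j \<phi> = dual_map (U j) (comp_map up dn j i) \<phi>"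
proof (cases "i \<le> j")
  case True
  then show ?thesis
    using upcomp_dual_up[where U = U and dn = dn, OF assms(2,3), of "nat (j - i)"]
    by (cases "j = i") (auto simp: comp_map_def)
next
  case False
  then show ?thesis
    using dncomp_dual_dn[where U = U and up = up, OF assms(1,3), of "nat (i - j)"]
    by (simp add: comp_map_def)
qed

context vector_space
begin

lemma lin_on_image_subspace:
  assumes "subspace A" "lin_on scale scale A B f"
  shows "subspace (f ` A)"
proof (rule subspaceI)
  show "0 \<in> f ` A"
    using assms lin_on_zero subspace_0 by (metis image_eqI)
  show "x + y \<in> f ` A" if xy: "x \<in> f ` A" "y \<in> f ` A" for x y
  proof -
    obtain a b where "a \<in> A" "b \<in> A" "x = f a" "y = f b" using xy by blast
    then have "a + b \<in> A" "x + y = f (a + b)"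
      using assms by (auto simp: subspace_add lin_on_def)
    then show ?thesis by blast
  qed
  show "c *s x \<in> f ` A" if x: "x \<in> f ` A" for c x
  proof -
    obtain a where "a \<in> A" "x = f a" using x by blast
    then have "c *s a \<in> A" "c *s x = f (c *s a)"
      using assms by (auto simp: subspace_scale lin_on_def)
    then show ?thesis by blast
  qed
qed

lemma lin_on_kernel_subspace:
  assumes "subspace A" "lin_on scale scale A B f"
  shows "subspace {x \<in> A. f x = 0}"
  using assms lin_on_zero[OF assms(2)]
  by (auto simp: subspace_def lin_on_def)

lemma lin_on_eq_on_span:
  assumes "subspace A" "S \<subseteq> A"
    and "lin_on scale (*) A UNIV f" "lin_on scale (*) A UNIV g"
    and "\<forall>v\<in>S. f v = g v" "x \<in> span S"
  shows "f x = g x"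
proof -
  have "subspace {x \<in> A. f x = g x}"
    using assms(1,3,4) lin_on_zero[OF assms(3)] lin_on_zero[OF assms(4)]
    by (auto simp: subspace_def lin_on_def)
  then have "span S \<subseteq> {x \<in> A. f x = g x}"
    using assms(2,5) by (intro span_minimal) auto
  then show ?thesis using assms(6) by blast
qed

lemma subspace_obtain_basis:
  assumes "subspace W"
  obtains W0 where "W0 \<subseteq> W" "independent W0" "span W0 = W"
  using maximal_independent_subset[of W] span_minimal[OF _ assms] by (metis subset_antisym)

lemma dual_map_in_dual_space:
  assumes "subspace A" "lin_on scale scale A B T" "\<phi> \<in> dual_space scale B"
  shows "dual_map A T \<phi> \<in> dual_space scale A"
  using assms by (auto simp: subspace_add subspace_scale dual_space_def lin_on_def dual_map_def)

lemma dual_space_lin_on_subset: "\<phi> \<in> dual_space scale A \<Longrightarrow> W \<subseteq> A \<Longrightarrow> lin_on scale (*) W UNIV \<phi>"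
  unfolding dual_space_def using lin_on_subset by blast

lemma dual_space_independent_extend:
  fixes g :: "'b \<Rightarrow> 'a"
  assumes "subspace A" "S \<subseteq> A" "independent S"
  obtains \<phi> where "\<phi> \<in> dual_space scale A" "\<forall>v\<in>S. \<phi> v = g v"
proof -
  interpret P: vector_space_pair scale "(*) :: 'a \<Rightarrow> 'a \<Rightarrow> 'a"
    by (intro_locales) (use vector_space_field_mult in \<open>auto simp: vector_space_def\<close>)
  obtain h where "Vector_Spaces.linear scale ((*) :: 'a \<Rightarrow> 'a \<Rightarrow> 'a) h" "\<forall>v\<in>S. h v = g v"
    using P.linear_independent_extend[OF assms(3)] by blast
  then interpret L: linear scale "(*) :: 'a \<Rightarrow> 'a \<Rightarrow> 'a" h
    by simp
  have "(\<lambda>x. if x \<in> A then h x else 0) \<in> dual_space scale A"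
    using assms(1) by (auto simp: dual_space_def lin_on_def subspace_add subspace_scale L.add L.scale)
  then show ?thesis
    by (rule that) (use \<open>\<forall>v\<in>S. h v = g v\<close> assms(2) in auto)
qed

lemma dual_space_extend:
  assumes "subspace B" "subspace W" "W \<subseteq> B" "lin_on scale (*) W UNIV \<chi>"
  obtains \<phi> where "\<phi> \<in> dual_space scale B" "\<forall>w\<in>W. \<phi> w = \<chi> w"
proof -
  obtain W0 where W0: "W0 \<subseteq> W" "independent W0" "span W0 = W"
    using subspace_obtain_basis[OF assms(2)] .
  obtain \<phi> where \<phi>: "\<phi> \<in> dual_space scale B" "\<forall>v\<in>W0. \<phi> v = \<chi> v"
    using dual_space_independent_extend[OF assms(1) subset_trans[OF W0(1) assms(3)] W0(2)] by blast
  have "\<phi> w = \<chi> w" if "w \<in> W" for w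
    by (rule lin_on_eq_on_span[OF assms(2) W0(1) dual_space_lin_on_subset[OF \<phi>(1) assms(3)] assms(4) \<phi>(2)])
      (simp add: W0(3) that)
  with \<phi>(1) show ?thesis using that by blast
qed

lemma dual_space_separate:
  assumes "subspace A" "subspace W" "W \<subseteq> A" "y \<in> A" "y \<notin> W"
  obtains \<phi> where "\<phi> \<in> dual_space scale A" "\<forall>w\<in>W. \<phi> w = 0" "\<phi> y \<noteq> 0"
proof -
  obtain W0 where W0: "W0 \<subseteq> W" "independent W0" "span W0 = W"
    using subspace_obtain_basis[OF assms(2)] .
  have "independent (insert y W0)"
    using W0 assms(5) by (intro independent_insertI) auto
  moreover have "insert y W0 \<subseteq> A"
    using W0(1) assms(3,4) by blast
  ultimately obtain \<phi> where \<phi>: "\<phi> \<in> dual_space scale A" "\<forall>v\<in>insert y W0. \<phi> v = (if v = y then 1 else 0)"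
    using dual_space_independent_extend[OF assms(1), of "insert y W0" "\<lambda>v. if v = y then 1 else 0"]
    by blast
  have "\<forall>v\<in>W0. \<phi> v = 0"
    using \<phi>(2) W0(1) assms(5) by auto
  moreover have "lin_on scale (*) W UNIV (\<lambda>_. 0)"
    by (simp add: lin_on_def)
  ultimately have "\<phi> w = 0" if "w \<in> W" for w
    using lin_on_eq_on_span[OF assms(2) W0(1) dual_space_lin_on_subset[OF \<phi>(1) assms(3)]]
    by (simp add: W0(3) that)
  with \<phi> show ?thesis using that by simp
qed

lemma dual_space_nonzero_at:
  assumes "subspace A" "y \<in> A" "y \<noteq> 0"
  obtains \<phi> where "\<phi> \<in> dual_space scale A" "\<phi> y \<noteq> 0"
proof -
  have "{0} \<subseteq> A" "y \<notin> {0}"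
    using assms subspace_0 by auto
  then show ?thesis
    using dual_space_separate[OF assms(1) subspace_single_0 _ assms(2)] that by blast
qed

lemma dual_space_factor:
  assumes "subspace A" "subspace B" "lin_on scale scale A B f"
    and "lin_on scale (*) A UNIV \<psi>" "\<forall>x\<in>A. f x = 0 \<longrightarrow> \<psi> x = 0"
  obtains \<phi> where "\<phi> \<in> dual_space scale B" "\<forall>x\<in>A. \<phi> (f x) = \<psi> x"
proof -
  have \<psi>_cong: "\<psi> x = \<psi> x'" if "x \<in> A" "x' \<in> A" "f x = f x'" for x x'
  proof -
    have "x - x' \<in> A" using assms(1) that subspace_diff by blast
    moreover have "f (x - x') = 0" using lin_on_diff[OF assms(3) that(1,2)] that calculation by simp
    ultimately show ?thesis using lin_on_diff[OF assms(4) that(1,2)] assms(5) by simp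
  qed
  define \<chi> where "\<chi> y = \<psi> (inv_into A f y)" for y
  have \<chi>: "\<chi> (f x) = \<psi> x" if "x \<in> A" for x
  proof -
    have fx: "f x \<in> f ` A" using that by blast
    show ?thesis
      unfolding \<chi>_def by (rule \<psi>_cong[OF inv_into_into[OF fx] that f_inv_into_f[OF fx]])
  qed
  have "lin_on scale (*) (f ` A) UNIV \<chi>"
    unfolding lin_on_def
  proof safe
    fix x y assume xy: "x \<in> A" "y \<in> A"
    then have "f x + f y = f (x + y)" "x + y \<in> A"
      using assms(1,3) subspace_add by (auto simp: lin_on_def)
    then show "\<chi> (f x + f y) = \<chi> (f x) + \<chi> (f y)"
      using assms(4) xy \<chi> by (simp add: lin_on_def)
  next
    fix c x assume x: "x \<in> A"
    then have "c *s f x = f (c *s x)" "c *s x \<in> A"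
      using assms(1,3) subspace_scale by (auto simp: lin_on_def)
    then show "\<chi> (c *s f x) = c * \<chi> (f x)"
      using assms(4) x \<chi> by (simp add: lin_on_def)
  qed simp
  moreover have "f ` A \<subseteq> B"
    using assms(3) by (auto simp: lin_on_def)
  ultimately obtain \<phi> where "\<phi> \<in> dual_space scale B" "\<forall>w\<in>f ` A. \<phi> w = \<chi> w"
    using dual_space_extend[OF assms(2) lin_on_image_subspace[OF assms(1,3)]] by blast
  then show ?thesis using that \<chi> by auto
qed

lemma dual_space_eqI:
  assumes "subspace A" "S \<subseteq> A" "span S = A"
    and "\<phi> \<in> dual_space scale A" "\<psi> \<in> dual_space scale A" "\<forall>v\<in>S. \<phi> v = \<psi> v"
  shows "\<phi> = \<psi>"
proof
  fix x show "\<phi> x = \<psi> x"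
  proof (cases "x \<in> A")
    case True
    then show ?thesis
      using lin_on_eq_on_span[OF assms(1,2) dual_space_lin_on_subset[OF assms(4)]
          dual_space_lin_on_subset[OF assms(5)] assms(6)] assms(3) by blast
  next
    case False
    then show ?thesis using assms(4,5) by (simp add: dual_space_def)
  qed
qed

lemma dual_space_eq_zero_iff:
  assumes "subspace A"
  shows "dual_space scale A = {0} \<longleftrightarrow> A = {0}"
proof
  assume dual0: "dual_space scale A = {0}"
  show "A = {0}"
  proof (rule ccontr)
    assume "A \<noteq> {0}"
    then obtain y where "y \<in> A" "y \<noteq> 0" using subspace_0[OF assms] by blast
    then obtain \<phi> where "\<phi> \<in> dual_space scale A" "\<phi> y \<noteq> 0"
      by (rule dual_space_nonzero_at[OF assms])
    with dual0 show False by simp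
  qed
next
  assume A0: "A = {0}"
  have "\<phi> = 0" if "\<phi> \<in> dual_space scale A" for \<phi>
  proof
    fix x show "\<phi> x = 0 x"
      using that dual_space_apply_zero[OF that] A0 by (cases "x = 0") (simp_all add: dual_space_def)
  qed
  moreover have "0 \<in> dual_space scale A"
    by (simp add: dual_space_def lin_on_def)
  ultimately show "dual_space scale A = {0}" by blast
qed

lemma obtain_dual_basis:
  assumes "subspace A" "BA \<subseteq> A" "independent BA"
  obtains e where "\<And>b. e b \<in> dual_space scale A"
    and "\<And>b v. v \<in> BA \<Longrightarrow> e b v = (if v = b then 1 else 0)"
proof -
  have "\<forall>b. \<exists>\<phi>. \<phi> \<in> dual_space scale A \<and> (\<forall>v\<in>BA. \<phi> v = (if v = b then 1 else 0))"
  proof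
    fix b :: 'b
    obtain \<phi> where "\<phi> \<in> dual_space scale A" "\<forall>v\<in>BA. \<phi> v = (if v = b then 1 else 0)"
      by (rule dual_space_independent_extend[OF assms])
    then show "\<exists>\<phi>. \<phi> \<in> dual_space scale A \<and> (\<forall>v\<in>BA. \<phi> v = (if v = b then 1 else 0))"
      by blast
  qed
  from choice[OF this] obtain e where
    "\<forall>b. e b \<in> dual_space scale A \<and> (\<forall>v\<in>BA. e b v = (if v = b then 1 else 0))"
    by blast
  then show ?thesis
    using that by blast
qed

lemma dual_space_subset_span_dual_basis:
  assumes "subspace A" "finite BA" "BA \<subseteq> A" "span BA = A"
    and e: "\<And>b. e b \<in> dual_space scale A"
    and e_eval: "\<And>b v. v \<in> BA \<Longrightarrow> e b v = (if v = b then 1 else 0)"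
  shows "dual_space scale A \<subseteq> dual.span (e ` BA)"
proof
  fix \<phi> assume \<phi>: "\<phi> \<in> dual_space scale A"
  define \<psi> where "\<psi> = (\<Sum>b\<in>BA. dual_scale (\<phi> b) (e b))"
  have "\<psi> \<in> dual_space scale A"
    unfolding \<psi>_def
    by (intro dual.subspace_sum[OF subspace_dual_space] dual.subspace_scale[OF subspace_dual_space] e)
  moreover have "\<phi> v = \<psi> v" if "v \<in> BA" for v
  proof -
    have "\<psi> v = (\<Sum>b\<in>BA. \<phi> b * e b v)"
      by (simp add: \<psi>_def sum_apply dual_scale_def)
    also have "\<dots> = (\<Sum>b\<in>BA. if b = v then \<phi> b else 0)"
      using e_eval that by (intro sum.cong) auto
    also have "\<dots> = \<phi> v"
      using assms(2) that by simp
    finally show ?thesis by simp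
  qed
  ultimately have "\<phi> = \<psi>"
    using dual_space_eqI[OF assms(1,3,4) \<phi>] by blast
  moreover have "\<psi> \<in> dual.span (e ` BA)"
    unfolding \<psi>_def by (intro dual.span_sum dual.span_scale dual.span_base imageI)
  ultimately show "\<phi> \<in> dual.span (e ` BA)" by simp
qed

lemma dim_dual_space:
  assumes "finite B0" "span B0 = A"
  shows "dual.dim (dual_space scale A) = dim A"
proof -
  have A: "subspace A"
    using assms(2) by auto
  obtain BA where BA: "BA \<subseteq> A" "independent BA" "span BA = A"
    using subspace_obtain_basis[OF A] .
  have "finite BA"
    using independent_span_bound[OF assms(1) BA(2)] BA(1) assms(2) by blast
  obtain e where e: "\<And>b. e b \<in> dual_space scale A"
    and e_eval: "\<And>b v. v \<in> BA \<Longrightarrow> e b v = (if v = b then 1 else 0)"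
    using obtain_dual_basis[OF A BA(1,2)] by blast
  have "e ` BA \<subseteq> dual_space scale A"
    using e by blast
  then have "dual.dim (dual_space scale A) = card (e ` BA)"
    using dual.basis_card_eq_dim dual_space_subset_span_dual_basis[OF A \<open>finite BA\<close> BA(1,3) e e_eval]
      independent_dual_basis[OF e_eval] by metis
  also have "\<dots> = card BA"
    by (rule card_image, rule inj_onI) (metis e_eval one_neq_zero)
  also have "\<dots> = dim A"
    using basis_card_eq_dim[of BA A] BA by simp
  finally show ?thesis .
qed

lemma image_eq_iff_inj_on_dual_map:
  assumes "subspace A" "subspace B" "lin_on scale scale A B T"
  shows "T ` A = B \<longleftrightarrow> inj_on (dual_map A T) (dual_space scale B)"
proof
  assume onto: "T ` A = B"
  show "inj_on (dual_map A T) (dual_space scale B)"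
  proof (rule inj_onI)
    fix \<phi> \<psi> assume \<phi>\<psi>: "\<phi> \<in> dual_space scale B" "\<psi> \<in> dual_space scale B"
      and eq: "dual_map A T \<phi> = dual_map A T \<psi>"
    show "\<phi> = \<psi>"
    proof
      fix y show "\<phi> y = \<psi> y"
      proof (cases "y \<in> B")
        case True
        then obtain x where "x \<in> A" "y = T x" using onto by blast
        then show ?thesis using fun_cong[OF eq, of x] by (simp add: dual_map_def)
      next
        case False
        then show ?thesis using \<phi>\<psi> by (simp add: dual_space_def)
      qed
    qed
  qed
next
  assume inj: "inj_on (dual_map A T) (dual_space scale B)"
  show "T ` A = B"
  proof (rule ccontr)
    have TA: "T ` A \<subseteq> B" using assms(3) by (auto simp: lin_on_def)
    assume "T ` A \<noteq> B"
    with TA obtain y where "y \<in> B" "y \<notin> T ` A" by blast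
    then obtain \<phi> where \<phi>: "\<phi> \<in> dual_space scale B" "\<forall>w\<in>T ` A. \<phi> w = 0" "\<phi> y \<noteq> 0"
      using dual_space_separate[OF assms(2) lin_on_image_subspace[OF assms(1,3)] TA] by blast
    have "dual_map A T \<phi> = dual_map A T 0"
      using \<phi>(2) by (auto simp: dual_map_def fun_eq_iff)
    moreover have "(0 :: 'b \<Rightarrow> 'a) \<in> dual_space scale B"
      by (simp add: dual_space_def lin_on_def)
    ultimately have "\<phi> = 0"
      using inj \<phi>(1) by (blast dest: inj_onD)
    with \<phi>(3) show False by simp
  qed
qed

lemma comp_eq_zero_iff_dual_comp_eq_zero:
  assumes "subspace A" "lin_on scale scale A B f" "lin_on scale scale B A g"
  shows "(\<forall>x\<in>A. g (f x) = 0) \<longleftrightarrow>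
    (\<forall>\<phi>\<in>dual_space scale A. dual_map A f (dual_map B g \<phi>) = (0 :: 'b \<Rightarrow> 'a))"
proof
  assume "\<forall>x\<in>A. g (f x) = 0"
  then show "\<forall>\<phi>\<in>dual_space scale A. dual_map A f (dual_map B g \<phi>) = 0"
    using assms(2) dual_space_apply_zero by (auto simp: dual_map_def fun_eq_iff lin_on_def)
next
  assume dual0: "\<forall>\<phi>\<in>dual_space scale A. dual_map A f (dual_map B g \<phi>) = (0 :: 'b \<Rightarrow> 'a)"
  show "\<forall>x\<in>A. g (f x) = 0"
  proof (rule ballI, rule ccontr)
    fix x assume x: "x \<in> A" and "g (f x) \<noteq> 0"
    moreover have "f x \<in> B" "g (f x) \<in> A"
      using assms(2,3) x by (auto simp: lin_on_def)
    ultimately obtain \<phi> :: "'b \<Rightarrow> 'a" where "\<phi> \<in> dual_space scale A" "\<phi> (g (f x)) \<noteq> 0"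
      using dual_space_nonzero_at[OF assms(1)] by blast
    moreover have "dual_map A f (dual_map B g \<phi>) x = \<phi> (g (f x))"
      using x \<open>f x \<in> B\<close> by (simp add: dual_map_def)
    ultimately show False using dual0 by simp
  qed
qed

lemma dual_space_decompose_along_kernels:
  assumes A: "subspace A" and "subspace B1" "subspace B2"
    and f1: "lin_on scale scale A B1 f1" and f2: "lin_on scale scale A B2 f2"
    and K: "\<forall>x\<in>A. f1 x = 0 \<longrightarrow> f2 x = 0 \<longrightarrow> x = 0"
    and \<psi>: "\<psi> \<in> dual_space scale A"
  obtains \<phi>1 \<phi>2 where "\<phi>1 \<in> dual_space scale B1" "\<phi>2 \<in> dual_space scale B2"
    "\<psi> = dual_map A f1 \<phi>1 + dual_map A f2 \<phi>2"
proof -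
  define K1 where "K1 = {x \<in> A. f1 x = 0}"
  have K1: "subspace K1" "K1 \<subseteq> A"
    unfolding K1_def using lin_on_kernel_subspace[OF A f1] by auto
  \<comment> \<open>First factor \<open>\<psi>\<close> restricted to \<open>ker f1\<close> through \<open>f2\<close>, then the remainder through \<open>f1\<close>.\<close>
  obtain \<phi>2 where \<phi>2: "\<phi>2 \<in> dual_space scale B2" "\<forall>x\<in>K1. \<phi>2 (f2 x) = \<psi> x"
  proof (rule dual_space_factor[OF K1(1) assms(3) lin_on_subset[OF f2 K1(2)]
        dual_space_lin_on_subset[OF \<psi> K1(2)]])
    show "\<forall>x\<in>K1. f2 x = 0 \<longrightarrow> \<psi> x = 0"
    proof (intro ballI impI)
      fix x assume "x \<in> K1" "f2 x = 0"
      then have "x = 0" using K unfolding K1_def by blast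
      then show "\<psi> x = 0" using dual_space_apply_zero[OF \<psi>] by simp
    qed
  qed
  let ?\<psi>' = "\<psi> - dual_map A f2 \<phi>2"
  have "?\<psi>' \<in> dual_space scale A"
    using dual.subspace_diff[OF subspace_dual_space \<psi> dual_map_in_dual_space[OF A f2 \<phi>2(1)]] .
  then obtain \<phi>1 where \<phi>1: "\<phi>1 \<in> dual_space scale B1" "\<forall>x\<in>A. \<phi>1 (f1 x) = ?\<psi>' x"
  proof (rule dual_space_factor[OF A assms(2) f1 dual_space_lin_on_subset[OF _ order_refl]])
    show "\<forall>x\<in>A. f1 x = 0 \<longrightarrow> ?\<psi>' x = 0"
      using \<phi>2(2) by (simp add: K1_def dual_map_def)
  qed
  have "\<psi> = dual_map A f1 \<phi>1 + dual_map A f2 \<phi>2"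
    using \<phi>1(2) \<psi> by (auto simp: fun_eq_iff dual_map_def dual_space_def)
  with \<phi>1(1) \<phi>2(1) show ?thesis by (rule that)
qed

lemma kernels_inter_eq_zero_iff_dual_images_sum_eq:
  assumes A: "subspace A" and B: "subspace B1" "subspace B2"
    and f1: "lin_on scale scale A B1 f1" and f2: "lin_on scale scale A B2 f2"
  shows "{x \<in> A. f2 x = 0 \<and> f1 x = 0} = {0} \<longleftrightarrow>
    {a + b | a b. a \<in> dual_map A f1 ` dual_space scale B1 \<and> b \<in> dual_map A f2 ` dual_space scale B2}
      = (dual_space scale A :: ('b \<Rightarrow> 'a) set)"
    (is "?K = {0} \<longleftrightarrow> ?S = ?D")
proof
  assume K0: "?K = {0}"
  have K: "\<forall>x\<in>A. f1 x = 0 \<longrightarrow> f2 x = 0 \<longrightarrow> x = 0"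
  proof (intro ballI impI)
    fix x assume "x \<in> A" "f1 x = 0" "f2 x = 0"
    then have "x \<in> ?K" by blast
    with K0 show "x = 0" by simp
  qed
  have "?D \<subseteq> ?S"
  proof
    fix \<psi> assume "\<psi> \<in> ?D"
    then obtain \<phi>1 \<phi>2 where "\<phi>1 \<in> dual_space scale B1" "\<phi>2 \<in> dual_space scale B2"
      "\<psi> = dual_map A f1 \<phi>1 + dual_map A f2 \<phi>2"
      by (rule dual_space_decompose_along_kernels[OF A B f1 f2 K])
    then show "\<psi> \<in> ?S" by blast
  qed
  moreover have "?S \<subseteq> ?D"
    using dual_map_in_dual_space[OF A f1] dual_map_in_dual_space[OF A f2]
      dual.subspace_add[OF subspace_dual_space] by blast
  ultimately show "?S = ?D" by blast
next
  assume S: "?S = ?D"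
  show "?K = {0}"
  proof (rule ccontr)
    have "0 \<in> ?K"
      using subspace_0[OF A] lin_on_zero[OF f1] lin_on_zero[OF f2] by simp
    moreover assume "?K \<noteq> {0}"
    ultimately obtain x where x: "x \<in> A" "f2 x = 0" "f1 x = 0" "x \<noteq> 0" by blast
    then obtain \<psi> :: "'b \<Rightarrow> 'a" where \<psi>: "\<psi> \<in> ?D" "\<psi> x \<noteq> 0"
      using dual_space_nonzero_at[OF A] by blast
    then obtain \<phi>1 \<phi>2 where \<phi>: "\<phi>1 \<in> dual_space scale B1" "\<phi>2 \<in> dual_space scale B2"
      "\<psi> = dual_map A f1 \<phi>1 + dual_map A f2 \<phi>2"
      using S by blast
    then have "\<psi> x = 0"
      using x dual_space_apply_zero[OF \<phi>(1)] dual_space_apply_zero[OF \<phi>(2)] by (simp add: dual_map_def)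
    with \<psi>(2) show False by simp
  qed
qed

lemma pure_iff_pure_dual:
  assumes "\<And>i. \<exists>B. finite B \<and> span B = U i"
  shows "pure scale U \<longleftrightarrow> pure dual_scale (dual_U scale U)"
proof -
  have "dual.dim (dual_U scale U i) = dim (U i)" for i
    using assms[of i] dim_dual_space unfolding dual_U_def by blast
  then show ?thesis by (simp add: pure_def)
qed

lemma nontrivial_iff_nontrivial_dual:
  assumes "\<And>i. subspace (U i)"
  shows "nontrivial U \<longleftrightarrow> nontrivial (dual_U scale U)"
  unfolding nontrivial_def dual_U_def using dual_space_eq_zero_iff[OF assms] by simp

context
  fixes U :: "int \<Rightarrow> 'b set" and up dn :: "int \<Rightarrow> 'b \<Rightarrow> 'b"
  assumes sub: "\<And>i. subspace (U i)"
    and up: "\<And>i. lin_on scale scale (U i) (U (i + 1)) (up i)"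
    and dn: "\<And>i. lin_on scale scale (U (i + 1)) (U i) (dn i)"
begin

lemma special_chain_iff_special_chain_dual:
  "special_chain U up dn \<longleftrightarrow> special_chain (dual_U scale U) (dual_up U dn) (dual_dn U up)"
  unfolding special_chain_def dual_U_def dual_up_def dual_dn_def
  using comp_eq_zero_iff_dual_comp_eq_zero[OF sub up dn] comp_eq_zero_iff_dual_comp_eq_zero[OF sub dn up]
  by simp

lemma linked_chain_iff_colinked_chain_dual:
  "linked_chain U up dn \<longleftrightarrow> colinked_chain (dual_U scale U) (dual_up U dn) (dual_dn U up)"
proof -
  have dn_prev: "lin_on scale scale (U i) (U (i - 1)) (dn (i - 1))" for i
    using dn[of "i - 1"] by simp
  have "{x \<in> U i. dn (i - 1) x = 0 \<and> up i x = 0} = {0} \<longleftrightarrow>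
      {a + b | a b. a \<in> dual_map (U i) (up i) ` dual_space scale (U (i + 1))
        \<and> b \<in> dual_map (U i) (dn (i - 1)) ` dual_space scale (U (i - 1))} = dual_space scale (U i)" for i
    by (rule kernels_inter_eq_zero_iff_dual_images_sum_eq[OF sub sub sub up dn_prev])
  then show ?thesis
    unfolding linked_chain_def colinked_chain_def special_chain_iff_special_chain_dual
      dual_U_def dual_up_def dual_dn_def
    by simp
qed

lemma is_support_iff_is_cosupport_dual:
  "is_support U up dn H \<longleftrightarrow> is_cosupport (dual_U scale U) (dual_up U dn) (dual_dn U up) H"
proof -
  have "comp_map (dual_up U dn) (dual_dn U up) i j \<phi> = dual_map (U j) (comp_map up dn j i) \<phi>"
    if "\<phi> \<in> dual_space scale (U i)" for i j \<phi>
    by (rule comp_map_dual_eq_dual_map) (use up dn that in \<open>auto simp: lin_on_def dual_space_def\<close>)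
  then have "inj_on (comp_map (dual_up U dn) (dual_dn U up) i j) (dual_space scale (U i))
      \<longleftrightarrow> inj_on (dual_map (U j) (comp_map up dn j i)) (dual_space scale (U i))" for i j
    by (intro inj_on_cong)
  then show ?thesis
    unfolding is_support_def is_cosupport_def dual_U_def
    using image_eq_iff_inj_on_dual_map[OF sub sub lin_on_comp_map[where U = U, OF up dn]] by simp
qed

end

end

theorem proposition2p5:
  fixes s :: "'a::field \<Rightarrow> 'v::ab_group_add \<Rightarrow> 'v"
    and U :: "int \<Rightarrow> 'v set" and up dn :: "int \<Rightarrow> 'v \<Rightarrow> 'v"
  assumes "is_rep s U up dn"
  defines "U' \<equiv> dual_U s U" and "up' \<equiv> dual_up U dn" and "dn' \<equiv> dual_dn U up"
  shows "(pure s U \<longleftrightarrow> pure dual_scale U')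
    \<and> (nontrivial U \<longleftrightarrow> nontrivial U')
    \<and> (special_chain U up dn \<longleftrightarrow> special_chain U' up' dn')
    \<and> (linked_chain U up dn \<longleftrightarrow> colinked_chain U' up' dn')
    \<and> (\<forall>H. is_support U up dn H \<longleftrightarrow> is_cosupport U' up' dn' H)"
proof -
  interpret vector_space s
    using assms(1) by (simp add: is_rep_def)
  have sub: "\<And>i. subspace (U i)"
    and up: "\<And>i. lin_on s s (U i) (U (i + 1)) (up i)"
    and dn: "\<And>i. lin_on s s (U (i + 1)) (U i) (dn i)"
    using assms(1) by (auto simp: is_rep_def fin_dim_subspace_def)
  have fin: "\<And>i. \<exists>B. finite B \<and> span B = U i"
    using assms(1) unfolding is_rep_def fin_dim_subspace_def by blast
  show ?thesis
    unfolding U'_def up'_def dn'_def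
    using pure_iff_pure_dual[of U, OF fin] nontrivial_iff_nontrivial_dual[of U, OF sub]
      special_chain_iff_special_chain_dual[of U up dn, OF sub up dn]
      linked_chain_iff_colinked_chain_dual[of U up dn, OF sub up dn]
      is_support_iff_is_cosupport_dual[of U up dn, OF sub up dn]
    by blast
qed

end
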